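(* Let $k_1,k_2,m$ be positive integers. The map $\Lambda:J^1_{k,m}(\mathcal O_K)\to J_{k,m}(\mathcal O_K)$, $\phi\mapsto\sum_{\epsilon\in\mathcal O_K^\times}\phi|_k\epsilon I$ (with $k=k_1+k_2$), is well defined, and the bilinear map $H$ induces a linear map $H:J_{k_1,m}\otimes J_{k_2,m}\to J^1_{k_1+k_2,m}(\mathcal O_K)$, so that the composite $$J_{k_1,m}\otimes J_{k_2,m}\xrightarrow{H}J^1_{k_1+k_2,m}(\mathcal O_K)\xrightarrow{\Lambda}J_{k_1+k_2,m}(\mathcal O_K)$$ is a linear map which maps tensor products of cusp forms to cusp forms.
   Context: Notation: $\mathcal H$ is the upper half plane, $e(x)=e^{2\pi i x}$, $K=\mathbb Q(i)$, $\mathcal O_K=\mathbb Z[i]$, $\mathcal O_K^\times=\{\pm1,\pm i\}$, $N(x)=x\bar x$, $\mathcal O_K^\sharp=\frac i2\mathcal O_K$. $J_{k,m}$ is the space of classical (Eichler–Zagier) Jacobi forms of weight $k$, index $m$. For $\psi$ on $\mathcal H\times\mathbb C^2$ and $\epsilon\in\mathcal O_K^\times$, $(\psi|_k\epsilon I)(\tau,z_1,z_2)=\epsilon^{-k}\psi(\tau,\epsilon z_1,\bar\epsilon z_2)$. For $\epsilon\in\mathcal O_K^\times$, $M=\begin{pmatrix}a&b\\c&d\end{pmatrix}\in SL(2,\mathbb Z)$: $(\phi|_{k,m}\epsilon M)(\tau,z_1,z_2)=\epsilon^{-k}(c\tau+d)^{-k}e^{-2\pi i m c z_1z_2/(c\tau+d)}\phi\bigl(M\tau,\tfrac{\epsilon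 z_1}{c\tau+d},\tfrac{\bar\epsilon z_2}{c\tau+d}\bigr)$; for $\lambda,\mu\in\mathcal O_K$, $(\phi|_m[\lambda,\mu])(\tau,z_1,z_2)=e^{2\pi i m(N(\lambda)\tau+\bar\lambda z_1+\lambda z_2)}\phi(\tau,z_1+\lambda\tau+\mu,z_2+\bar\lambda\tau+\bar\mu)$. $J_{k,m}(\mathcal O_K)$ (resp. $J^1_{k,m}(\mathcal O_K)$) is the space of holomorphic $\phi$ on $\mathcal H\times\mathbb C^2$ with $\phi|_{k,m}\epsilon M=\phi$ for all $\epsilon\in\mathcal O_K^\times$ (resp. only $\epsilon=1$) and all $M\in SL(2,\mathbb Z)$, $\phi|_m[\lambda,\mu]=\phi$ for all $\lambda,\mu\in\mathcal O_K$, and with a Fourier expansion $\sum_{n\ge0}\sum_{r\in\mathcal O_K^\sharp,\,nm\ge N(r)}c_\phi(n,r)e(n\tau+rz_1+\bar rz_2)$; cusp forms are those with $c_\phi(n,r)=0$ whenever $nm=N(r)$. For $\phi_1\in J_{k_1,m}$, $\phi_2\in J_{k_2,m}$, $H(\phi_1,\phi_2)(\tau,z_1,z_2)=\sum_{\epsilon\in\mathcal O_K^\times}\bigl(\phi_1(\tau,\frac12(z_1+z_2))\phi_2(\tau,\frac i2(z_1-z_2))\bigr)|_{k_1+k_2}\epsilon I$. *)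

theory Defs
  imports "HOL-Analysis.Analysis"
begin

definition e2pi :: "complex \<Rightarrow> complex" where
  "e2pi x = exp (2 * of_real pi * \<i> * x)"

definition holo2 :: "(complex \<times> complex \<Rightarrow> complex) \<Rightarrow> (complex \<times> complex) set \<Rightarrow> bool" where
  "holo2 f U \<longleftrightarrow> (\<forall>x\<in>U. \<exists>a b. (f has_derivative (\<lambda>h. a * fst h + b * snd h)) (at x))"

definition holo3 :: "(complex \<times> complex \<times> complex \<Rightarrow> complex) \<Rightarrow> (complex \<times> complex \<times> complex) set \<Rightarrow> bool" where
  "holo3 f U \<longleftrightarrow> (\<forall>x\<in>U. \<exists>a b c.
      (f has_derivative (\<lambda>h. a * fst h + b * fst (snd h) + c * snd (snd h))) (at x))"

definition SL2Z :: "int \<Rightarrow> int \<Rightarrow> int \<Rightarrow> int \<Rightarrow> bool" where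
  "SL2Z a b c d \<longleftrightarrow> a * d - b * c = 1"

definition mob :: "int \<Rightarrow> int \<Rightarrow> int \<Rightarrow> int \<Rightarrow> complex \<Rightarrow> complex" where
  "mob a b c d \<tau> = (of_int a * \<tau> + of_int b) / (of_int c * \<tau> + of_int d)"

definition slashJ :: "nat \<Rightarrow> nat \<Rightarrow> int \<Rightarrow> int \<Rightarrow> int \<Rightarrow> int \<Rightarrow>
    (complex \<Rightarrow> complex \<Rightarrow> complex) \<Rightarrow> complex \<Rightarrow> complex \<Rightarrow> complex" where
  "slashJ k m a b c d \<phi> \<tau> z =
     inverse ((of_int c * \<tau> + of_int d) ^ k)
     * e2pi (- of_nat m * of_int c * z ^ 2 / (of_int c * \<tau> + of_int d))
     * \<phi> (mob a b c d \<tau>) (z / (of_int c * \<tau> + of_int d))"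

definition ellJ :: "nat \<Rightarrow> int \<Rightarrow> int \<Rightarrow> (complex \<Rightarrow> complex \<Rightarrow> complex) \<Rightarrow> complex \<Rightarrow> complex \<Rightarrow> complex" where
  "ellJ m l \<mu> \<phi> \<tau> z =
     e2pi (of_nat m * (of_int l ^ 2 * \<tau> + 2 * of_int l * z)) * \<phi> \<tau> (z + of_int l * \<tau> + of_int \<mu>)"

definition fourierJ :: "nat \<Rightarrow> (complex \<Rightarrow> complex \<Rightarrow> complex) \<Rightarrow> (nat \<Rightarrow> int \<Rightarrow> complex) \<Rightarrow> bool" where
  "fourierJ m \<phi> c \<longleftrightarrow> (\<forall>\<tau> z. Im \<tau> > 0 \<longrightarrow>
     ((\<lambda>(n, r). c n r * e2pi (of_nat n * \<tau> + of_int r * z)) has_sum \<phi> \<tau> z)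
       {(n, r). r ^ 2 \<le> 4 * int n * int m})"

definition Jac :: "nat \<Rightarrow> nat \<Rightarrow> (complex \<Rightarrow> complex \<Rightarrow> complex) set" where
  "Jac k m = {\<phi>. holo2 (\<lambda>p. \<phi> (fst p) (snd p)) {p. Im (fst p) > 0}
     \<and> (\<forall>a b c d. SL2Z a b c d \<longrightarrow> (\<forall>\<tau> z. Im \<tau> > 0 \<longrightarrow> slashJ k m a b c d \<phi> \<tau> z = \<phi> \<tau> z))
     \<and> (\<forall>l \<mu> \<tau> z. Im \<tau> > 0 \<longrightarrow> ellJ m l \<mu> \<phi> \<tau> z = \<phi> \<tau> z)
     \<and> (\<exists>c. fourierJ m \<phi> c)}"

definition JacCusp :: "nat \<Rightarrow> nat \<Rightarrow> (complex \<Rightarrow> complex \<Rightarrow> complex) set" where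
  "JacCusp k m = {\<phi> \<in> Jac k m. \<exists>c. fourierJ m \<phi> c
     \<and> (\<forall>n r. r ^ 2 = 4 * int n * int m \<longrightarrow> c n r = 0)}"

definition UK :: "complex set" where
  "UK = {1, -1, \<i>, -\<i>}"

definition gauss :: "int \<Rightarrow> int \<Rightarrow> complex" where
  "gauss a b = of_int a + \<i> * of_int b"

definition slashEI :: "nat \<Rightarrow> complex \<Rightarrow> (complex \<Rightarrow> complex \<Rightarrow> complex \<Rightarrow> complex)
    \<Rightarrow> complex \<Rightarrow> complex \<Rightarrow> complex \<Rightarrow> complex" where
  "slashEI k \<epsilon> \<psi> \<tau> z1 z2 = inverse (\<epsilon> ^ k) * \<psi> \<tau> (\<epsilon> * z1) (cnj \<epsilon> * z2)"

definition slashK :: "nat \<Rightarrow> nat \<Rightarrow> complex \<Rightarrow> int \<Rightarrow> int \<Rightarrow> int \<Rightarrow> int \<Rightarrow>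
    (complex \<Rightarrow> complex \<Rightarrow> complex \<Rightarrow> complex) \<Rightarrow> complex \<Rightarrow> complex \<Rightarrow> complex \<Rightarrow> complex" where
  "slashK k m \<epsilon> a b c d \<phi> \<tau> z1 z2 =
     inverse (\<epsilon> ^ k) * inverse ((of_int c * \<tau> + of_int d) ^ k)
     * e2pi (- of_nat m * of_int c * z1 * z2 / (of_int c * \<tau> + of_int d))
     * \<phi> (mob a b c d \<tau>) (\<epsilon> * z1 / (of_int c * \<tau> + of_int d)) (cnj \<epsilon> * z2 / (of_int c * \<tau> + of_int d))"

definition ellK :: "nat \<Rightarrow> complex \<Rightarrow> complex \<Rightarrow> (complex \<Rightarrow> complex \<Rightarrow> complex \<Rightarrow> complex)
    \<Rightarrow> complex \<Rightarrow> complex \<Rightarrow> complex \<Rightarrow> complex" where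
  "ellK m lam \<mu> \<phi> \<tau> z1 z2 =
     e2pi (of_nat m * (lam * cnj lam * \<tau> + cnj lam * z1 + lam * z2))
     * \<phi> \<tau> (z1 + lam * \<tau> + \<mu>) (z2 + cnj lam * \<tau> + cnj \<mu>)"

text \<open>Fourier expansion: r ranges over O_K^# = (i/2) Z[i] = {(a + b i)/2 | a b integers};
  N(r) = (a^2+b^2)/4, so n m >= N(r) iff a^2 + b^2 <= 4 n m.\<close>
definition fourierK :: "nat \<Rightarrow> (complex \<Rightarrow> complex \<Rightarrow> complex \<Rightarrow> complex) \<Rightarrow> (nat \<Rightarrow> int \<Rightarrow> int \<Rightarrow> complex) \<Rightarrow> bool" where
  "fourierK m \<phi> c \<longleftrightarrow> (\<forall>\<tau> z1 z2. Im \<tau> > 0 \<longrightarrow>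
     ((\<lambda>(n, a, b). c n a b * e2pi (of_nat n * \<tau> + gauss a b / 2 * z1 + cnj (gauss a b / 2) * z2))
        has_sum \<phi> \<tau> z1 z2)
       {(n, a, b). a ^ 2 + b ^ 2 \<le> 4 * int n * int m})"

text \<open>Invariance under eps M for eps in E; E = UK gives J_{k,m}(O_K), E = {1} gives J^1_{k,m}(O_K).\<close>
definition JKgen :: "complex set \<Rightarrow> nat \<Rightarrow> nat \<Rightarrow> (complex \<Rightarrow> complex \<Rightarrow> complex \<Rightarrow> complex) set" where
  "JKgen E k m = {\<phi>. holo3 (\<lambda>p. \<phi> (fst p) (fst (snd p)) (snd (snd p))) {p. Im (fst p) > 0}
     \<and> (\<forall>\<epsilon>\<in>E. \<forall>a b c d. SL2Z a b c d \<longrightarrow>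
          (\<forall>\<tau> z1 z2. Im \<tau> > 0 \<longrightarrow> slashK k m \<epsilon> a b c d \<phi> \<tau> z1 z2 = \<phi> \<tau> z1 z2))
     \<and> (\<forall>l1 l2 u1 u2 \<tau> z1 z2. Im \<tau> > 0 \<longrightarrow>
          ellK m (gauss l1 l2) (gauss u1 u2) \<phi> \<tau> z1 z2 = \<phi> \<tau> z1 z2)
     \<and> (\<exists>c. fourierK m \<phi> c)}"

definition JK :: "nat \<Rightarrow> nat \<Rightarrow> (complex \<Rightarrow> complex \<Rightarrow> complex \<Rightarrow> complex) set" where
  "JK k m = JKgen UK k m"

definition J1K :: "nat \<Rightarrow> nat \<Rightarrow> (complex \<Rightarrow> complex \<Rightarrow> complex \<Rightarrow> complex) set" where
  "J1K k m = JKgen {1} k m"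

definition JKCusp :: "nat \<Rightarrow> nat \<Rightarrow> (complex \<Rightarrow> complex \<Rightarrow> complex \<Rightarrow> complex) set" where
  "JKCusp k m = {\<phi> \<in> JK k m. \<exists>c. fourierK m \<phi> c
     \<and> (\<forall>n a b. a ^ 2 + b ^ 2 = 4 * int n * int m \<longrightarrow> c n a b = 0)}"

definition LamK :: "nat \<Rightarrow> (complex \<Rightarrow> complex \<Rightarrow> complex \<Rightarrow> complex) \<Rightarrow> complex \<Rightarrow> complex \<Rightarrow> complex \<Rightarrow> complex" where
  "LamK k \<psi> = (\<lambda>\<tau> z1 z2. \<Sum>\<epsilon>\<in>UK. slashEI k \<epsilon> \<psi> \<tau> z1 z2)"

definition HK :: "nat \<Rightarrow> nat \<Rightarrow> (complex \<Rightarrow> complex \<Rightarrow> complex) \<Rightarrow> (complex \<Rightarrow> complex \<Rightarrow> complex)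
    \<Rightarrow> complex \<Rightarrow> complex \<Rightarrow> complex \<Rightarrow> complex" where
  "HK k1 k2 \<phi>1 \<phi>2 = (\<lambda>\<tau> z1 z2. \<Sum>\<epsilon>\<in>UK. slashEI (k1 + k2) \<epsilon>
       (\<lambda>t w1 w2. \<phi>1 t ((w1 + w2) / 2) * \<phi>2 t (\<i> * (w1 - w2) / 2)) \<tau> z1 z2)"

end

theory Submission
  imports Defs
begin

(* Write Pf phi1 phi2 for the product phi1(tau, (z1+z2)/2) * phi2(tau, i(z1-z2)/2), so that
   H(phi1, phi2) = Lambda(Pf phi1 phi2).  The theorem then splits into three independent facts.
   (1) Pf maps J_{k1,m} x J_{k2,m} into J^1_{k1+k2,m}(O_K): the substitution u = (z1+z2)/2,
       v = i(z1-z2)/2 turns u^2 + v^2 into z1 z2 and lattice translations by lambda in Z[i]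
       into translations by Re lambda and -Im lambda, so modular and elliptic invariance of the
       factors give those of the product; multiplying the two Fourier series (a Cauchy product
       over a product index set) gives a Hermitian Fourier expansion.
   (2) Lambda maps J^1_{k,m}(O_K) into J_{k,m}(O_K): each slash eps I by a unit preserves
       holomorphy, SL(2,Z)- and Z[i]-lattice invariance and Fourier expansions (the unit just
       rotates the index lattice O_K^#), and the averaged function is invariant under all units.
   (3) Cusp conditions are preserved: rotation by a unit preserves N(r), and a coefficient of
       the product on N(r) = nm only collects products of coefficients of the factors on their
       own boundaries (so cuspidality of the first factor already suffices). *)

section \<open>The unit group of Z[i] and its action on the index lattice\<close>

lemma UK_cases: "e \<in> UK \<Longrightarrow> e = 1 \<or> e = -1 \<or> e = \<i> \<or> e = -\<i>"
  by (simp add: UK_def)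

lemma finite_UK: "finite UK"
  by (simp add: UK_def)

lemma UK_cnj: "e \<in> UK \<Longrightarrow> cnj e \<in> UK"
  by (auto simp: UK_def)

lemma UK_mult: "e \<in> UK \<Longrightarrow> f \<in> UK \<Longrightarrow> e * f \<in> UK"
  by (auto simp: UK_def)

lemma UK_norm: "e \<in> UK \<Longrightarrow> e * cnj e = 1"
  by (auto simp: UK_def)

lemma UK_norm': "e \<in> UK \<Longrightarrow> cnj e * e = 1"
  using UK_norm by (simp add: mult.commute)

lemma floor_minus_one [simp]: "\<lfloor>- (1::real)\<rfloor> = - 1"
  by (metis floor_of_int of_int_1 of_int_minus)

text \<open>Multiplication by a unit e on Z[i], written in coordinates (a, b) for a + b i.
  For e in UK the real and imaginary parts of e are integers, so the floors only serve
  to read them as integers.\<close>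
definition unit_act :: "complex \<Rightarrow> int \<times> int \<Rightarrow> int \<times> int" where
  "unit_act e = (\<lambda>(a, b). (a * \<lfloor>Re e\<rfloor> - b * \<lfloor>Im e\<rfloor>, a * \<lfloor>Im e\<rfloor> + b * \<lfloor>Re e\<rfloor>))"

lemma gauss_unit_act:
  "e \<in> UK \<Longrightarrow> gauss (fst (unit_act e (a, b))) (snd (unit_act e (a, b))) = e * gauss a b"
  by (drule UK_cases) (auto simp: unit_act_def gauss_def algebra_simps)

text \<open>The action preserves the norm a^2 + b^2, hence the index set of Fourier expansions
  and its boundary N(r) = nm.\<close>
lemma unit_act_norm:
  "e \<in> UK \<Longrightarrow> (fst (unit_act e (a, b)))\<^sup>2 + (snd (unit_act e (a, b)))\<^sup>2 = a\<^sup>2 + b\<^sup>2"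
  by (drule UK_cases) (auto simp: unit_act_def algebra_simps power2_eq_square)

lemma unit_act_cnj_inverse: "e \<in> UK \<Longrightarrow> unit_act (cnj e) (unit_act e p) = p"
  by (drule UK_cases) (auto simp: unit_act_def split: prod.splits)

lemma has_sum_product:
  fixes f g :: "_ \<Rightarrow> complex"
  assumes f: "(f has_sum F) A" and g: "(g has_sum G) B"
  shows "((\<lambda>(x, y). f x * g y) has_sum F * G) (A \<times> B)"
proof (rule has_sum_SigmaI[where g = "\<lambda>x. f x * G"])
  show "((\<lambda>y. case (x, y) of (x, y) \<Rightarrow> f x * g y) has_sum f x * G) B" for x
    using has_sum_cmult_right[OF g] by simp
  show "((\<lambda>x. f x * G) has_sum F * G) A"
    using has_sum_cmult_left[OF f] .
  have fa: "(\<lambda>x. norm (f x)) summable_on A" and ga: "(\<lambda>y. norm (g y)) summable_on B"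
    using f g summable_on_iff_abs_summable_on_complex has_sum_imp_summable by blast+
  have inner: "\<forall>x\<in>A. (\<lambda>y. norm (f x * g y)) summable_on B"
    using summable_on_cmult_right[OF ga] by (simp add: norm_mult)
  have "(\<lambda>x. norm (f x) * (\<Sum>\<^sub>\<infinity>y\<in>B. norm (g y))) summable_on A"
    using summable_on_cmult_left[OF fa] by simp
  then have outer: "(\<lambda>x. norm (\<Sum>\<^sub>\<infinity>y\<in>B. norm (f x * g y))) summable_on A"
    by (simp add: norm_mult infsum_cmult_right' infsum_nonneg)
  have "(\<lambda>p. norm ((\<lambda>(x, y). f x * g y) p)) summable_on A \<times> B"
    using Infinite_Sum.abs_summable_on_Sigma_iff[of "\<lambda>(x, y). f x * g y" A "\<lambda>_. B"] inner outer by simp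
  then show "(\<lambda>(x, y). f x * g y) summable_on A \<times> B"
    using summable_on_iff_abs_summable_on_complex by blast
qed

lemma has_sum_finite_sum:
  fixes f :: "_ \<Rightarrow> _ \<Rightarrow> 'b::topological_comm_monoid_add"
  assumes "finite I" "\<And>i. i \<in> I \<Longrightarrow> (f i has_sum s i) A"
  shows "((\<lambda>x. \<Sum>i\<in>I. f i x) has_sum (\<Sum>i\<in>I. s i)) A"
  using assms by (induction I rule: finite_induct) (auto intro: has_sum_add)

definition upper3 :: "(complex \<times> complex \<times> complex) set" where
  "upper3 = {p. Im (fst p) > 0}"

lemma holo3_add: "holo3 f U \<Longrightarrow> holo3 g U \<Longrightarrow> holo3 (\<lambda>p. f p + g p) U"
  unfolding holo3_def
proof
  fix x assume "\<forall>x\<in>U. \<exists>a b c. (f has_derivative (\<lambda>h. a * fst h + b * fst (snd h) + c * snd (snd h))) (at x)"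
    "\<forall>x\<in>U. \<exists>a b c. (g has_derivative (\<lambda>h. a * fst h + b * fst (snd h) + c * snd (snd h))) (at x)"
    "x \<in> U"
  then obtain a b c a' b' c' where
    "(f has_derivative (\<lambda>h. a * fst h + b * fst (snd h) + c * snd (snd h))) (at x)"
    "(g has_derivative (\<lambda>h. a' * fst h + b' * fst (snd h) + c' * snd (snd h))) (at x)"
    by blast
  from has_derivative_add[OF this]
  show "\<exists>a b c. ((\<lambda>p. f p + g p) has_derivative (\<lambda>h. a * fst h + b * fst (snd h) + c * snd (snd h))) (at x)"
    by (intro exI[of _ "a + a'"] exI[of _ "b + b'"] exI[of _ "c + c'"])
      (erule has_derivative_eq_rhs, auto simp: algebra_simps)
qed

lemma holo3_sum:
  assumes "finite A" "\<And>e. e \<in> A \<Longrightarrow> holo3 (F e) U"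
  shows "holo3 (\<lambda>p. \<Sum>e\<in>A. F e p) U"
  using assms
proof (induction A rule: finite_induct)
  case empty
  show ?case unfolding holo3_def by (auto intro!: exI[of _ 0])
qed (auto intro: holo3_add)

text \<open>Slashing by a unit is a constant multiple of a complex-linear change of variables.\<close>
lemma holo3_slashEI:
  assumes h: "holo3 (\<lambda>p. \<psi> (fst p) (fst (snd p)) (snd (snd p))) upper3"
  shows "holo3 (\<lambda>p. slashEI k e \<psi> (fst p) (fst (snd p)) (snd (snd p))) upper3"
  unfolding holo3_def
proof
  fix x :: "complex \<times> complex \<times> complex" assume x: "x \<in> upper3"
  define L where "L = (\<lambda>p::complex \<times> complex \<times> complex. (fst p, e * fst (snd p), cnj e * snd (snd p)))"
  have L: "(L has_derivative L) (at x)"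
    unfolding L_def by (auto intro!: derivative_eq_intros)
  have "L x \<in> upper3" using x by (simp add: L_def upper3_def)
  then obtain a b c where d: "((\<lambda>p. \<psi> (fst p) (fst (snd p)) (snd (snd p)))
      has_derivative (\<lambda>h. a * fst h + b * fst (snd h) + c * snd (snd h))) (at (L x))"
    using h unfolding holo3_def by blast
  have "((\<lambda>y. inverse (e ^ k) * \<psi> (fst (L y)) (fst (snd (L y))) (snd (snd (L y)))) has_derivative
      (\<lambda>h. inverse (e ^ k) * (a * fst (L h) + b * fst (snd (L h)) + c * snd (snd (L h))))) (at x)"
    using has_derivative_mult_right[OF diff_chain_at[OF L d]] by (simp add: o_def)
  then show "\<exists>a b c. ((\<lambda>p. slashEI k e \<psi> (fst p) (fst (snd p)) (snd (snd p)))
      has_derivative (\<lambda>h. a * fst h + b * fst (snd h) + c * snd (snd h))) (at x)"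
    by (intro exI[of _ "inverse (e ^ k) * a"] exI[of _ "inverse (e ^ k) * b * e"]
        exI[of _ "inverse (e ^ k) * c * cnj e"])
      (simp add: slashEI_def L_def, erule has_derivative_eq_rhs, auto simp: algebra_simps)
qed

definition Pf :: "(complex \<Rightarrow> complex \<Rightarrow> complex) \<Rightarrow> (complex \<Rightarrow> complex \<Rightarrow> complex)
    \<Rightarrow> complex \<Rightarrow> complex \<Rightarrow> complex \<Rightarrow> complex" where
  "Pf \<phi>1 \<phi>2 = (\<lambda>t w1 w2. \<phi>1 t ((w1 + w2) / 2) * \<phi>2 t (\<i> * (w1 - w2) / 2))"

text \<open>Product rule composed with the linear substitutions (tau, u) and (tau, v).\<close>
lemma holo3_Pf:
  assumes h1: "holo2 (\<lambda>p. \<phi>1 (fst p) (snd p)) {p. Im (fst p) > 0}"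
      and h2: "holo2 (\<lambda>p. \<phi>2 (fst p) (snd p)) {p. Im (fst p) > 0}"
  shows "holo3 (\<lambda>p. Pf \<phi>1 \<phi>2 (fst p) (fst (snd p)) (snd (snd p))) upper3"
  unfolding holo3_def
proof
  fix x :: "complex \<times> complex \<times> complex" assume x: "x \<in> upper3"
  define M1 where "M1 = (\<lambda>p::complex \<times> complex \<times> complex. (fst p, (fst (snd p) + snd (snd p)) / 2))"
  define M2 where "M2 = (\<lambda>p::complex \<times> complex \<times> complex. (fst p, \<i> * (fst (snd p) - snd (snd p)) / 2))"
  have L1: "(M1 has_derivative M1) (at x)"
    unfolding M1_def by (auto intro!: derivative_eq_intros simp: add_divide_distrib)
  have L2: "(M2 has_derivative M2) (at x)"
    unfolding M2_def by (auto intro!: derivative_eq_intros simp: diff_divide_distrib right_diff_distrib)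
  have "M1 x \<in> {p. Im (fst p) > 0}" "M2 x \<in> {p. Im (fst p) > 0}"
    using x by (auto simp: M1_def M2_def upper3_def)
  then obtain a1 b1 a2 b2 where
    d1: "((\<lambda>p. \<phi>1 (fst p) (snd p)) has_derivative (\<lambda>h. a1 * fst h + b1 * snd h)) (at (M1 x))" and
    d2: "((\<lambda>p. \<phi>2 (fst p) (snd p)) has_derivative (\<lambda>h. a2 * fst h + b2 * snd h)) (at (M2 x))"
    using h1 h2 unfolding holo2_def by blast
  define F1 where "F1 = \<phi>1 (fst (M1 x)) (snd (M1 x))"
  define F2 where "F2 = \<phi>2 (fst (M2 x)) (snd (M2 x))"
  have "((\<lambda>y. \<phi>1 (fst (M1 y)) (snd (M1 y)) * \<phi>2 (fst (M2 y)) (snd (M2 y))) has_derivative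
      (\<lambda>h. F1 * (a2 * fst (M2 h) + b2 * snd (M2 h)) + (a1 * fst (M1 h) + b1 * snd (M1 h)) * F2)) (at x)"
    using has_derivative_mult[OF diff_chain_at[OF L1 d1] diff_chain_at[OF L2 d2]]
    by (simp add: o_def F1_def F2_def)
  then show "\<exists>a b c. ((\<lambda>p. Pf \<phi>1 \<phi>2 (fst p) (fst (snd p)) (snd (snd p)))
      has_derivative (\<lambda>h. a * fst h + b * fst (snd h) + c * snd (snd h))) (at x)"
    by (intro exI[of _ "F1 * a2 + a1 * F2"] exI[of _ "F1 * b2 * \<i> / 2 + b1 * F2 / 2"]
        exI[of _ "- F1 * b2 * \<i> / 2 + b1 * F2 / 2"])
      (simp add: Pf_def M1_def M2_def, erule has_derivative_eq_rhs,
       auto simp: M1_def M2_def algebra_simps add_divide_distrib diff_divide_distrib)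
qed

lemma slashK_unit_factor:
  "slashK k m e a b c d \<phi> \<tau> z1 z2 = slashK k m 1 a b c d (slashEI k e \<phi>) \<tau> z1 z2"
  by (simp add: slashK_def slashEI_def)

text \<open>The two slash actions commute, because z1 z2 is unchanged by (e z1, cnj e z2).\<close>
lemma slashK_slashEI:
  assumes e: "e \<in> UK"
    and inv: "\<forall>\<tau> z1 z2. Im \<tau> > 0 \<longrightarrow> slashK k m 1 a b c d \<psi> \<tau> z1 z2 = \<psi> \<tau> z1 z2"
    and t: "Im \<tau> > 0"
  shows "slashK k m 1 a b c d (slashEI k e \<psi>) \<tau> z1 z2 = slashEI k e \<psi> \<tau> z1 z2"
proof -
  have exponent: "- of_nat m * of_int c * (e * z1) * (cnj e * z2) / (of_int c * \<tau> + of_int d)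
      = - of_nat m * of_int c * z1 * z2 / (of_int c * \<tau> + of_int d)"
    using UK_norm[OF e] by (simp add: algebra_simps)
  have "slashEI k e \<psi> \<tau> z1 z2 = inverse (e ^ k) * slashK k m 1 a b c d \<psi> \<tau> (e * z1) (cnj e * z2)"
    using inv t by (simp add: slashEI_def)
  also have "\<dots> = slashK k m 1 a b c d (slashEI k e \<psi>) \<tau> z1 z2"
    unfolding slashK_def slashEI_def exponent by (simp add: algebra_simps)
  finally show ?thesis ..
qed

text \<open>Slashing by a unit preserves invariance under the Z[i]-lattice, since the unit
  permutes the lattice and fixes the Hermitian exponential factor.\<close>
lemma ellK_slashEI:
  assumes e: "e \<in> UK"
    and inv: "\<forall>l1 l2 u1 u2 \<tau> z1 z2. Im \<tau> > 0 \<longrightarrow>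
      ellK m (gauss l1 l2) (gauss u1 u2) \<psi> \<tau> z1 z2 = \<psi> \<tau> z1 z2"
    and t: "Im \<tau> > 0"
  shows "ellK m (gauss l1 l2) (gauss u1 u2) (slashEI k e \<psi>) \<tau> z1 z2 = slashEI k e \<psi> \<tau> z1 z2"
proof -
  define L where "L = gauss l1 l2"
  define M where "M = gauss u1 u2"
  have inv': "\<psi> \<tau> w1 w2 = ellK m (e * L) (e * M) \<psi> \<tau> w1 w2" for w1 w2
    using inv t gauss_unit_act[OF e, of l1 l2] gauss_unit_act[OF e, of u1 u2]
    unfolding L_def M_def by metis
  have exponent: "of_nat m * (e * L * cnj (e * L) * \<tau> + cnj (e * L) * (e * z1) + e * L * (cnj e * z2))
      = of_nat m * (L * cnj L * \<tau> + cnj L * z1 + L * z2)"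
  proof -
    have "of_nat m * (e * L * cnj (e * L) * \<tau> + cnj (e * L) * (e * z1) + e * L * (cnj e * z2))
      = (e * cnj e) * (of_nat m * (L * cnj L * \<tau> + cnj L * z1 + L * z2))"
      by (simp add: algebra_simps)
    then show ?thesis using UK_norm[OF e] by simp
  qed
  have A1: "e * z1 + e * L * \<tau> + e * M = e * (z1 + L * \<tau> + M)"
    by (simp add: algebra_simps)
  have A2: "cnj e * z2 + cnj (e * L) * \<tau> + cnj (e * M) = cnj e * (z2 + cnj L * \<tau> + cnj M)"
    by (simp add: algebra_simps)
  have "slashEI k e \<psi> \<tau> z1 z2 = inverse (e ^ k) * ellK m (e * L) (e * M) \<psi> \<tau> (e * z1) (cnj e * z2)"
    unfolding slashEI_def using inv' by metis
  also have "\<dots> = ellK m L M (slashEI k e \<psi>) \<tau> z1 z2"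
    unfolding ellK_def slashEI_def exponent A1 A2 by (simp add: algebra_simps)
  finally show ?thesis unfolding L_def M_def ..
qed

text \<open>Slashing by a unit rotates the Fourier indices: the coefficient at r becomes
  eps^(-k) times the old coefficient at cnj eps * r.\<close>
definition unit_coeffs :: "nat \<Rightarrow> complex \<Rightarrow> (nat \<Rightarrow> int \<Rightarrow> int \<Rightarrow> complex) \<Rightarrow> nat \<Rightarrow> int \<Rightarrow> int \<Rightarrow> complex" where
  "unit_coeffs k e c n a b =
     inverse (e ^ k) * c n (fst (unit_act (cnj e) (a, b))) (snd (unit_act (cnj e) (a, b)))"

lemma fourier_slashEI:
  assumes e: "e \<in> UK" and f: "fourierK m \<psi> c"
  shows "fourierK m (slashEI k e \<psi>) (unit_coeffs k e c)"
  unfolding fourierK_def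
proof (intro allI impI)
  fix \<tau> z1 z2 :: complex assume t: "Im \<tau> > 0"
  define S where "S = {(n::nat, a::int, b::int). a ^ 2 + b ^ 2 \<le> 4 * int n * int m}"
  define E where "E = (\<lambda>(n::nat) (a::int) (b::int) w1 w2.
      e2pi (of_nat n * \<tau> + gauss a b / 2 * w1 + cnj (gauss a b / 2) * w2))"
  have ce: "cnj e \<in> UK" using e by (rule UK_cnj)
  have "((\<lambda>(n, a, b). c n a b * E n a b (e * z1) (cnj e * z2)) has_sum \<psi> \<tau> (e * z1) (cnj e * z2)) S"
    using f t unfolding fourierK_def S_def E_def by blast
  then have h: "((\<lambda>x. inverse (e ^ k) * (\<lambda>(n, a, b). c n a b * E n a b (e * z1) (cnj e * z2)) x)
      has_sum slashEI k e \<psi> \<tau> z1 z2) S"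
    unfolding slashEI_def by (rule has_sum_cmult_right)
  text \<open>Reindex by the rotation p \<mapsto> e p of the lattice, which preserves S.\<close>
  have "((\<lambda>x. inverse (e ^ k) * (\<lambda>(n, a, b). c n a b * E n a b (e * z1) (cnj e * z2)) x)
      has_sum slashEI k e \<psi> \<tau> z1 z2) S
     = ((\<lambda>(n, a, b). unit_coeffs k e c n a b * E n a b z1 z2) has_sum slashEI k e \<psi> \<tau> z1 z2) S"
    apply (rule has_sum_reindex_bij_witness[where j = "\<lambda>(n, p). (n, unit_act e p)"
          and i = "\<lambda>(n, p). (n, unit_act (cnj e) p)"])
        apply (auto simp: S_def case_prod_beta unit_act_norm[OF e] unit_act_norm[OF ce]
          unit_act_cnj_inverse[OF e] unit_act_cnj_inverse[OF ce])[4]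
    using UK_norm[OF e] UK_norm'[OF e]
    using unit_act_cnj_inverse[OF ce]
    by (auto simp: E_def unit_coeffs_def case_prod_beta gauss_unit_act[OF e]
        unit_act_cnj_inverse[OF e] algebra_simps)
  with h show "((\<lambda>(n, a, b). unit_coeffs k e c n a b *
        e2pi (of_nat n * \<tau> + gauss a b / 2 * z1 + cnj (gauss a b / 2) * z2))
        has_sum slashEI k e \<psi> \<tau> z1 z2) {(n, a, b). a\<^sup>2 + b\<^sup>2 \<le> 4 * int n * int m}"
    unfolding S_def E_def by simp
qed

section \<open>The averaging map Lambda\<close>

lemma LamK_unit_invariant:
  assumes e: "e \<in> UK"
  shows "slashEI k e (LamK k \<psi>) \<tau> z1 z2 = LamK k \<psi> \<tau> z1 z2"
proof -
  have "slashEI k e (LamK k \<psi>) \<tau> z1 z2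
      = (\<Sum>f\<in>UK. inverse ((f * e) ^ k) * \<psi> \<tau> ((f * e) * z1) (cnj (f * e) * z2))"
    by (simp add: slashEI_def LamK_def sum_distrib_left power_mult_distrib algebra_simps)
  also have "\<dots> = LamK k \<psi> \<tau> z1 z2"
    unfolding LamK_def slashEI_def
    using e UK_norm[OF e] UK_norm'[OF e] UK_mult[OF _ e] UK_mult[OF _ UK_cnj[OF e]]
    by (intro sum.reindex_bij_witness[where j = "\<lambda>f. f * e" and i = "\<lambda>f. f * cnj e"])
      (auto simp: mult.assoc)
  finally show ?thesis .
qed

lemma LamK_linear:
  "LamK k (\<lambda>\<tau> z1 z2. s * \<psi> \<tau> z1 z2 + \<psi>' \<tau> z1 z2)
     = (\<lambda>\<tau> z1 z2. s * LamK k \<psi> \<tau> z1 z2 + LamK k \<psi>' \<tau> z1 z2)"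
  by (simp add: fun_eq_iff LamK_def slashEI_def sum.distrib sum_distrib_left algebra_simps)

lemma fourier_LamK:
  assumes f: "fourierK m \<psi> c"
  shows "fourierK m (LamK k \<psi>) (\<lambda>n a b. \<Sum>e\<in>UK. unit_coeffs k e c n a b)"
  unfolding fourierK_def
proof (intro allI impI)
  fix \<tau> z1 z2 :: complex assume "Im \<tau> > 0"
  then have "((\<lambda>x. \<Sum>e\<in>UK. (\<lambda>(n, a, b). unit_coeffs k e c n a b *
        e2pi (of_nat n * \<tau> + gauss a b / 2 * z1 + cnj (gauss a b / 2) * z2)) x)
      has_sum (\<Sum>e\<in>UK. slashEI k e \<psi> \<tau> z1 z2)) {(n, a, b). a ^ 2 + b ^ 2 \<le> 4 * int n * int m}"
    using fourier_slashEI[OF _ f] unfolding fourierK_def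
    by (intro has_sum_finite_sum finite_UK) auto
  moreover have "(\<lambda>x. \<Sum>e\<in>UK. (\<lambda>(n, a, b). unit_coeffs k e c n a b *
        e2pi (of_nat n * \<tau> + gauss a b / 2 * z1 + cnj (gauss a b / 2) * z2)) x)
    = (\<lambda>(n, a, b). (\<Sum>e\<in>UK. unit_coeffs k e c n a b) *
        e2pi (of_nat n * \<tau> + gauss a b / 2 * z1 + cnj (gauss a b / 2) * z2))"
    by (auto simp: fun_eq_iff sum_distrib_right)
  ultimately show "((\<lambda>(n, a, b). (\<Sum>e\<in>UK. unit_coeffs k e c n a b) *
        e2pi (of_nat n * \<tau> + gauss a b / 2 * z1 + cnj (gauss a b / 2) * z2))
      has_sum LamK k \<psi> \<tau> z1 z2) {(n, a, b). a ^ 2 + b ^ 2 \<le> 4 * int n * int m}"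
    unfolding LamK_def by metis
qed

text \<open>Invariance under SL(2,Z) for the unit 1 gives invariance of the average under
  every eps M: the eps-part is absorbed by the average, the M-part commutes with the
  unit slashes.\<close>
lemma LamK_modular:
  assumes e: "e \<in> UK"
    and inv: "\<forall>\<tau> z1 z2. Im \<tau> > 0 \<longrightarrow> slashK k m 1 a b c d \<psi> \<tau> z1 z2 = \<psi> \<tau> z1 z2"
    and t: "Im \<tau> > 0"
  shows "slashK k m e a b c d (LamK k \<psi>) \<tau> z1 z2 = LamK k \<psi> \<tau> z1 z2"
proof -
  have "slashEI k e (LamK k \<psi>) = LamK k \<psi>"
    using LamK_unit_invariant[OF e] by (simp add: fun_eq_iff)
  then have "slashK k m e a b c d (LamK k \<psi>) \<tau> z1 z2 = slashK k m 1 a b c d (LamK k \<psi>) \<tau> z1 z2"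
    using slashK_unit_factor[of k m e a b c d "LamK k \<psi>"] by simp
  also have "\<dots> = (\<Sum>f\<in>UK. slashK k m 1 a b c d (slashEI k f \<psi>) \<tau> z1 z2)"
    by (simp add: slashK_def LamK_def sum_distrib_left)
  also have "\<dots> = LamK k \<psi> \<tau> z1 z2"
    unfolding LamK_def using slashK_slashEI[OF _ inv t] by (intro sum.cong) auto
  finally show ?thesis .
qed

lemma LamK_elliptic:
  assumes inv: "\<forall>l1 l2 u1 u2 \<tau> z1 z2. Im \<tau> > 0 \<longrightarrow>
      ellK m (gauss l1 l2) (gauss u1 u2) \<psi> \<tau> z1 z2 = \<psi> \<tau> z1 z2"
    and t: "Im \<tau> > 0"
  shows "ellK m (gauss l1 l2) (gauss u1 u2) (LamK k \<psi>) \<tau> z1 z2 = LamK k \<psi> \<tau> z1 z2"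
proof -
  have "ellK m (gauss l1 l2) (gauss u1 u2) (LamK k \<psi>) \<tau> z1 z2
      = (\<Sum>f\<in>UK. ellK m (gauss l1 l2) (gauss u1 u2) (slashEI k f \<psi>) \<tau> z1 z2)"
    by (simp add: ellK_def LamK_def sum_distrib_left)
  also have "\<dots> = LamK k \<psi> \<tau> z1 z2"
    unfolding LamK_def using ellK_slashEI[OF _ inv t] by (intro sum.cong) auto
  finally show ?thesis .
qed

lemma LamK_JK:
  assumes \<psi>: "\<psi> \<in> J1K k m"
  shows "LamK k \<psi> \<in> JK k m"
proof -
  have h: "holo3 (\<lambda>p. \<psi> (fst p) (fst (snd p)) (snd (snd p))) upper3"
    and sl: "\<And>a b c d. SL2Z a b c d \<Longrightarrow>
      \<forall>\<tau> z1 z2. Im \<tau> > 0 \<longrightarrow> slashK k m 1 a b c d \<psi> \<tau> z1 z2 = \<psi> \<tau> z1 z2"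
    and el: "\<forall>l1 l2 u1 u2 \<tau> z1 z2. Im \<tau> > 0 \<longrightarrow>
      ellK m (gauss l1 l2) (gauss u1 u2) \<psi> \<tau> z1 z2 = \<psi> \<tau> z1 z2"
    and "\<exists>c. fourierK m \<psi> c"
    using \<psi> unfolding J1K_def JKgen_def upper3_def by auto
  then obtain c where c: "fourierK m \<psi> c" by blast
  have "holo3 (\<lambda>p. LamK k \<psi> (fst p) (fst (snd p)) (snd (snd p))) upper3"
    unfolding LamK_def by (rule holo3_sum[OF finite_UK holo3_slashEI[OF h]])
  then show ?thesis
    unfolding JK_def JKgen_def
    using LamK_modular[OF _ sl] LamK_elliptic[OF el] fourier_LamK[OF c, of k]
    by (auto simp: upper3_def)
qed

lemma JK_subset_J1K: "\<psi> \<in> JK k m \<Longrightarrow> \<psi> \<in> J1K k m"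
  unfolding JK_def J1K_def JKgen_def UK_def by auto

section \<open>The product of two classical Jacobi forms\<close>

lemma HK_eq_LamK_Pf: "HK k1 k2 \<phi>1 \<phi>2 = LamK (k1 + k2) (Pf \<phi>1 \<phi>2)"
  unfolding HK_def LamK_def Pf_def ..

lemma HK_linear_left:
  "HK k1 k2 (\<lambda>\<tau> z. s * \<phi>1 \<tau> z + \<phi>1' \<tau> z) \<phi>2
     = (\<lambda>\<tau> z1 z2. s * HK k1 k2 \<phi>1 \<phi>2 \<tau> z1 z2 + HK k1 k2 \<phi>1' \<phi>2 \<tau> z1 z2)"
  by (simp add: fun_eq_iff HK_def slashEI_def sum.distrib sum_distrib_left algebra_simps)

lemma HK_linear_right:
  "HK k1 k2 \<phi>1 (\<lambda>\<tau> z. s * \<phi>2 \<tau> z + \<phi>2' \<tau> z)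
     = (\<lambda>\<tau> z1 z2. s * HK k1 k2 \<phi>1 \<phi>2 \<tau> z1 z2 + HK k1 k2 \<phi>1 \<phi>2' \<tau> z1 z2)"
  by (simp add: fun_eq_iff HK_def slashEI_def sum.distrib sum_distrib_left algebra_simps)

lemma Jac_modular: "\<phi> \<in> Jac k m \<Longrightarrow> SL2Z a b c d \<Longrightarrow> Im \<tau> > 0 \<Longrightarrow>
  \<phi> \<tau> z = inverse ((of_int c * \<tau> + of_int d) ^ k)
     * e2pi (- of_nat m * of_int c * z ^ 2 / (of_int c * \<tau> + of_int d))
     * \<phi> (mob a b c d \<tau>) (z / (of_int c * \<tau> + of_int d))"
  unfolding Jac_def slashJ_def by auto

lemma Jac_elliptic: "\<phi> \<in> Jac k m \<Longrightarrow> Im \<tau> > 0 \<Longrightarrow>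
  \<phi> \<tau> z = e2pi (of_nat m * (of_int l ^ 2 * \<tau> + 2 * of_int l * z)) * \<phi> \<tau> (z + of_int l * \<tau> + of_int \<mu>)"
  unfolding Jac_def ellJ_def by auto

lemma e2pi_add: "e2pi x * e2pi y = e2pi (x + y)"
  by (simp add: e2pi_def distrib_left exp_add)

lemma cnj_gauss: "cnj (gauss a b) = of_int a - \<i> * of_int b"
  by (simp add: gauss_def)

text \<open>Modular invariance of the product, using u^2 + v^2 = z1 z2 for u = (z1+z2)/2,
  v = i(z1-z2)/2.\<close>
lemma Pf_modular:
  assumes p1: "\<phi>1 \<in> Jac k1 m" and p2: "\<phi>2 \<in> Jac k2 m" and sl: "SL2Z a b c d" and t: "Im \<tau> > 0"
  shows "slashK (k1 + k2) m 1 a b c d (Pf \<phi>1 \<phi>2) \<tau> z1 z2 = Pf \<phi>1 \<phi>2 \<tau> z1 z2"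
proof -
  define j where "j = of_int c * \<tau> + of_int d"
  define u where "u = (z1 + z2) / 2"
  define v where "v = \<i> * (z1 - z2) / 2"
  define E where "E = (\<lambda>w. e2pi (- of_nat m * of_int c * w ^ 2 / j))"
  have uv: "- of_nat m * of_int c * u ^ 2 + - of_nat m * of_int c * v ^ 2 = - of_nat m * of_int c * z1 * z2"
    unfolding u_def v_def by (simp add: power2_eq_square field_simps)
  have factor: "E u * E v = e2pi (- of_nat m * of_int c * z1 * z2 / j)"
    unfolding E_def e2pi_add add_divide_distrib[symmetric] uv ..
  have u': "(z1 / j + z2 / j) / 2 = u / j"
    unfolding u_def by (simp add: add_divide_distrib mult.commute)
  have v': "\<i> * (z1 / j - z2 / j) / 2 = v / j"
    unfolding v_def by (simp add: diff_divide_distrib right_diff_distrib mult.commute)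
  have "Pf \<phi>1 \<phi>2 \<tau> z1 z2 = \<phi>1 \<tau> u * \<phi>2 \<tau> v"
    by (simp add: Pf_def u_def v_def)
  also have "\<dots> = (inverse (j ^ k1) * E u * \<phi>1 (mob a b c d \<tau>) (u / j))
        * (inverse (j ^ k2) * E v * \<phi>2 (mob a b c d \<tau>) (v / j))"
    using Jac_modular[OF p1 sl t, of u] Jac_modular[OF p2 sl t, of v] by (simp add: j_def E_def)
  also have "\<dots> = inverse (j ^ (k1 + k2)) * (E u * E v) * \<phi>1 (mob a b c d \<tau>) (u / j) * \<phi>2 (mob a b c d \<tau>) (v / j)"
    by (simp add: power_add inverse_mult_distrib algebra_simps)
  also have "\<dots> = slashK (k1 + k2) m 1 a b c d (Pf \<phi>1 \<phi>2) \<tau> z1 z2"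
    unfolding factor by (simp add: slashK_def Pf_def j_def[symmetric] u' v')
  finally show ?thesis ..
qed

text \<open>Translating (z1, z2) by (lambda, cnj lambda) translates u by Re lambda and v by -Im lambda.\<close>
lemma Pf_elliptic:
  assumes p1: "\<phi>1 \<in> Jac k1 m" and p2: "\<phi>2 \<in> Jac k2 m" and t: "Im \<tau> > 0"
  shows "ellK m (gauss l1 l2) (gauss u1 u2) (Pf \<phi>1 \<phi>2) \<tau> z1 z2 = Pf \<phi>1 \<phi>2 \<tau> z1 z2"
proof -
  define u where "u = (z1 + z2) / 2"
  define v where "v = \<i> * (z1 - z2) / 2"
  have shift_u: "((z1 + gauss l1 l2 * \<tau> + gauss u1 u2) + (z2 + cnj (gauss l1 l2) * \<tau> + cnj (gauss u1 u2))) / 2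
      = u + of_int l1 * \<tau> + of_int u1"
    unfolding u_def by (simp add: cnj_gauss gauss_def field_simps)
  have shift_v: "\<i> * ((z1 + gauss l1 l2 * \<tau> + gauss u1 u2) - (z2 + cnj (gauss l1 l2) * \<tau> + cnj (gauss u1 u2))) / 2
      = v + of_int (- l2) * \<tau> + of_int (- u2)"
    unfolding v_def by (simp add: cnj_gauss gauss_def field_simps)
  have factor: "e2pi (of_nat m * (of_int l1 ^ 2 * \<tau> + 2 * of_int l1 * u))
       * e2pi (of_nat m * (of_int (- l2) ^ 2 * \<tau> + 2 * of_int (- l2) * v))
     = e2pi (of_nat m * (gauss l1 l2 * cnj (gauss l1 l2) * \<tau> + cnj (gauss l1 l2) * z1 + gauss l1 l2 * z2))"
    unfolding e2pi_add u_def v_def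
    by (rule arg_cong[where f = e2pi], simp add: cnj_gauss gauss_def field_simps power2_eq_square)
  have "Pf \<phi>1 \<phi>2 \<tau> z1 z2 = \<phi>1 \<tau> u * \<phi>2 \<tau> v"
    by (simp add: Pf_def u_def v_def)
  also have "\<dots> = e2pi (of_nat m * (of_int l1 ^ 2 * \<tau> + 2 * of_int l1 * u)) * \<phi>1 \<tau> (u + of_int l1 * \<tau> + of_int u1)
      * (e2pi (of_nat m * (of_int (- l2) ^ 2 * \<tau> + 2 * of_int (- l2) * v)) * \<phi>2 \<tau> (v + of_int (- l2) * \<tau> + of_int (- u2)))"
    using Jac_elliptic[OF p1 t, of u l1 u1] Jac_elliptic[OF p2 t, of v "- l2" "- u2"] by simp
  also have "\<dots> = ellK m (gauss l1 l2) (gauss u1 u2) (Pf \<phi>1 \<phi>2) \<tau> z1 z2"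
    unfolding ellK_def Pf_def shift_u shift_v factor[symmetric] by (simp add: algebra_simps)
  finally show ?thesis ..
qed

text \<open>Fourier coefficients of the product: the coefficient at (n, (a + b i)/2) collects the
  products c1(n1, a) c2(n - n1, b) over the admissible splittings n = n1 + (n - n1).\<close>
definition conv :: "nat \<Rightarrow> (nat \<Rightarrow> int \<Rightarrow> complex) \<Rightarrow> (nat \<Rightarrow> int \<Rightarrow> complex) \<Rightarrow> nat \<Rightarrow> int \<Rightarrow> int \<Rightarrow> complex" where
  "conv m c1 c2 n a b = (\<Sum>n1\<in>{n1. n1 \<le> n \<and> a\<^sup>2 \<le> 4 * int n1 * int m \<and> b\<^sup>2 \<le> 4 * int (n - n1) * int m}.
      c1 n1 a * c2 (n - n1) b)"

lemma e2pi_uv: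
  "e2pi (of_nat n1 * \<tau> + of_int a * ((z1 + z2) / 2)) * e2pi (of_nat n2 * \<tau> + of_int b * (\<i> * (z1 - z2) / 2))
   = e2pi (of_nat (n1 + n2) * \<tau> + gauss a b / 2 * z1 + cnj (gauss a b / 2) * z2)"
  unfolding e2pi_add
  by (simp, rule arg_cong[where f = e2pi], simp add: cnj_gauss gauss_def field_simps)

lemma fourier_Pf:
  assumes f1: "fourierJ m \<phi>1 c1" and f2: "fourierJ m \<phi>2 c2"
  shows "fourierK m (Pf \<phi>1 \<phi>2) (conv m c1 c2)"
  unfolding fourierK_def
proof (intro allI impI)
  fix \<tau> z1 z2 :: complex assume t: "Im \<tau> > 0"
  define u where "u = (z1 + z2) / 2"
  define v where "v = \<i> * (z1 - z2) / 2"
  define S1 where "S1 = {(n::nat, r::int). r ^ 2 \<le> 4 * int n * int m}"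
  define S where "S = {(n::nat, a::int, b::int). a ^ 2 + b ^ 2 \<le> 4 * int n * int m}"
  define Fib where "Fib = (\<lambda>(n::nat, a::int, b::int).
      {n1. n1 \<le> n \<and> a\<^sup>2 \<le> 4 * int n1 * int m \<and> b\<^sup>2 \<le> 4 * int (n - n1) * int m})"
  define E where "E = (\<lambda>(n::nat, a::int, b::int).
      e2pi (of_nat n * \<tau> + gauss a b / 2 * z1 + cnj (gauss a b / 2) * z2))"
  define g1 where "g1 = (\<lambda>(n, r). c1 n r * e2pi (of_nat n * \<tau> + of_int r * u))"
  define g2 where "g2 = (\<lambda>(n, r). c2 n r * e2pi (of_nat n * \<tau> + of_int r * v))"
  have "(g1 has_sum \<phi>1 \<tau> u) S1" "(g2 has_sum \<phi>2 \<tau> v) S1"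
    using f1 f2 t unfolding fourierJ_def S1_def g1_def g2_def by blast+
  then have prod: "((\<lambda>(x, y). g1 x * g2 y) has_sum Pf \<phi>1 \<phi>2 \<tau> z1 z2) (S1 \<times> S1)"
    unfolding Pf_def u_def v_def by (rule has_sum_product)
  have product_term: "g1 (n1, a) * g2 (n2, b) = c1 n1 a * c2 n2 b * E (n1 + n2, a, b)" for n1 n2 a b
  proof -
    have "g1 (n1, a) * g2 (n2, b)
        = c1 n1 a * c2 n2 b * (e2pi (of_nat n1 * \<tau> + of_int a * u) * e2pi (of_nat n2 * \<tau> + of_int b * v))"
      by (simp add: g1_def g2_def mult_ac)
    also have "\<dots> = c1 n1 a * c2 n2 b * E (n1 + n2, a, b)"
      unfolding u_def v_def e2pi_uv E_def by simp
    finally show ?thesis .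
  qed
  have "((\<lambda>(x, y). g1 x * g2 y) has_sum Pf \<phi>1 \<phi>2 \<tau> z1 z2) (S1 \<times> S1) =
        ((\<lambda>((n, a, b), n1). c1 n1 a * c2 (n - n1) b * E (n, a, b)) has_sum Pf \<phi>1 \<phi>2 \<tau> z1 z2) (Sigma S Fib)"
    apply (rule has_sum_reindex_bij_witness[where j = "\<lambda>((n1, a), (n2, b)). ((n1 + n2, a, b), n1)"
          and i = "\<lambda>((n, a, b), n1). ((n1, a), (n - n1, b))"])
        apply (auto simp: S1_def S_def Fib_def ring_distribs)[4]
    subgoal for x by (cases x) (clarsimp simp: product_term)
    by simp
  with prod have regrouped: "((\<lambda>((n, a, b), n1). c1 n1 a * c2 (n - n1) b * E (n, a, b))
      has_sum Pf \<phi>1 \<phi>2 \<tau> z1 z2) (Sigma S Fib)"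
    by simp
  have "finite (Fib x)" for x
    unfolding Fib_def by (cases x) auto
  then have "((\<lambda>x. \<Sum>n1\<in>Fib x. (\<lambda>((n, a, b), n1). c1 n1 a * c2 (n - n1) b * E (n, a, b)) (x, n1))
      has_sum Pf \<phi>1 \<phi>2 \<tau> z1 z2) S"
    by (intro has_sum_Sigma'[OF regrouped]) simp
  moreover have "(\<Sum>n1\<in>Fib x. (\<lambda>((n, a, b), n1). c1 n1 a * c2 (n - n1) b * E (n, a, b)) (x, n1))
     = (\<lambda>(n, a, b). conv m c1 c2 n a b * E (n, a, b)) x" for x
    by (cases x) (simp add: conv_def Fib_def sum_distrib_right)
  ultimately show "((\<lambda>(n, a, b). conv m c1 c2 n a b *
        e2pi (of_nat n * \<tau> + gauss a b / 2 * z1 + cnj (gauss a b / 2) * z2))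
      has_sum Pf \<phi>1 \<phi>2 \<tau> z1 z2) {(n, a, b). a\<^sup>2 + b\<^sup>2 \<le> 4 * int n * int m}"
    by (simp add: S_def E_def)
qed

lemma Pf_J1K:
  assumes p1: "\<phi>1 \<in> Jac k1 m" and p2: "\<phi>2 \<in> Jac k2 m"
  shows "Pf \<phi>1 \<phi>2 \<in> J1K (k1 + k2) m"
proof -
  obtain c1 c2 where "fourierJ m \<phi>1 c1" "fourierJ m \<phi>2 c2"
    using p1 p2 by (auto simp: Jac_def)
  then have "fourierK m (Pf \<phi>1 \<phi>2) (conv m c1 c2)"
    by (rule fourier_Pf)
  moreover have "holo3 (\<lambda>p. Pf \<phi>1 \<phi>2 (fst p) (fst (snd p)) (snd (snd p))) upper3"
    using p1 p2 unfolding Jac_def by (intro holo3_Pf) auto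
  ultimately show ?thesis
    unfolding J1K_def JKgen_def using Pf_modular[OF p1 p2] Pf_elliptic[OF p1 p2]
    by (auto simp: upper3_def)
qed

lemma HK_J1K: "\<phi>1 \<in> Jac k1 m \<Longrightarrow> \<phi>2 \<in> Jac k2 m \<Longrightarrow> HK k1 k2 \<phi>1 \<phi>2 \<in> J1K (k1 + k2) m"
  unfolding HK_eq_LamK_Pf by (rule JK_subset_J1K[OF LamK_JK[OF Pf_J1K]])

section \<open>Cusp conditions\<close>

definition cuspidalK :: "nat \<Rightarrow> (complex \<Rightarrow> complex \<Rightarrow> complex \<Rightarrow> complex) \<Rightarrow> bool" where
  "cuspidalK m \<psi> \<longleftrightarrow> (\<exists>c. fourierK m \<psi> c \<and> (\<forall>n a b. a\<^sup>2 + b\<^sup>2 = 4 * int n * int m \<longrightarrow> c n a b = 0))"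

lemma JKCusp_iff: "\<psi> \<in> JKCusp k m \<longleftrightarrow> \<psi> \<in> JK k m \<and> cuspidalK m \<psi>"
  unfolding JKCusp_def cuspidalK_def by auto

text \<open>Rotation by units preserves the boundary N(r) = nm.\<close>
lemma cuspidalK_LamK:
  assumes "cuspidalK m \<psi>"
  shows "cuspidalK m (LamK k \<psi>)"
proof -
  obtain c where f: "fourierK m \<psi> c" and v: "\<forall>n a b. a\<^sup>2 + b\<^sup>2 = 4 * int n * int m \<longrightarrow> c n a b = 0"
    using assms unfolding cuspidalK_def by blast
  have "(\<Sum>e\<in>UK. unit_coeffs k e c n a b) = 0" if h: "a\<^sup>2 + b\<^sup>2 = 4 * int n * int m" for n a b
  proof (rule sum.neutral, intro ballI)
    fix e assume "e \<in> UK"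
    then have "(fst (unit_act (cnj e) (a, b)))\<^sup>2 + (snd (unit_act (cnj e) (a, b)))\<^sup>2 = 4 * int n * int m"
      using unit_act_norm[OF UK_cnj, of e a b] h by simp
    then show "unit_coeffs k e c n a b = 0"
      using v by (simp add: unit_coeffs_def)
  qed
  then show ?thesis
    unfolding cuspidalK_def using fourier_LamK[OF f] by blast
qed

text \<open>On the boundary a^2 + b^2 = 4nm, every admissible splitting puts both factors on
  their own boundaries a^2 = 4 n1 m and b^2 = 4 (n - n1) m.\<close>
lemma conv_cusp:
  assumes "\<forall>n r. r\<^sup>2 = 4 * int n * int m \<longrightarrow> c1 n r = 0"
      and "a\<^sup>2 + b\<^sup>2 = 4 * int n * int m"
  shows "conv m c1 c2 n a b = 0"
  unfolding conv_def
proof (rule sum.neutral, safe)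
  fix n1 assume h: "n1 \<le> n" "a\<^sup>2 \<le> 4 * int n1 * int m" "b\<^sup>2 \<le> 4 * int (n - n1) * int m"
  have "int (n - n1) = int n - int n1" using h(1) by simp
  then have "a\<^sup>2 = 4 * int n1 * int m" using h assms(2) by (simp add: algebra_simps)
  then show "c1 n1 a * c2 (n - n1) b = 0" using assms(1) by simp
qed

lemma cuspidalK_Pf:
  assumes "\<phi>1 \<in> JacCusp k1 m" and "\<phi>2 \<in> Jac k2 m"
  shows "cuspidalK m (Pf \<phi>1 \<phi>2)"
proof -
  obtain c1 where c1: "fourierJ m \<phi>1 c1" "\<forall>n r. r\<^sup>2 = 4 * int n * int m \<longrightarrow> c1 n r = 0"
    using assms(1) by (auto simp: JacCusp_def)
  obtain c2 where c2: "fourierJ m \<phi>2 c2"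
    using assms(2) by (auto simp: Jac_def)
  show ?thesis
    unfolding cuspidalK_def using fourier_Pf[OF c1(1) c2] conv_cusp[OF c1(2)] by blast
qed

theorem corollary4p6:
  fixes k1 k2 m :: nat
  assumes "0 < k1" and "0 < k2" and "0 < m"
  shows "(\<forall>\<psi> \<in> J1K (k1 + k2) m. LamK (k1 + k2) \<psi> \<in> JK (k1 + k2) m)
    \<and> (\<forall>\<psi> \<in> J1K (k1 + k2) m. \<forall>\<psi>' \<in> J1K (k1 + k2) m. \<forall>s::complex.
         LamK (k1 + k2) (\<lambda>\<tau> z1 z2. s * \<psi> \<tau> z1 z2 + \<psi>' \<tau> z1 z2)
         = (\<lambda>\<tau> z1 z2. s * LamK (k1 + k2) \<psi> \<tau> z1 z2 + LamK (k1 + k2) \<psi>' \<tau> z1 z2))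
    \<and> (\<forall>\<phi>1 \<in> Jac k1 m. \<forall>\<phi>2 \<in> Jac k2 m. HK k1 k2 \<phi>1 \<phi>2 \<in> J1K (k1 + k2) m)
    \<and> (\<forall>\<phi>1 \<in> Jac k1 m. \<forall>\<phi>1' \<in> Jac k1 m. \<forall>\<phi>2 \<in> Jac k2 m. \<forall>s::complex.
         HK k1 k2 (\<lambda>\<tau> z. s * \<phi>1 \<tau> z + \<phi>1' \<tau> z) \<phi>2
         = (\<lambda>\<tau> z1 z2. s * HK k1 k2 \<phi>1 \<phi>2 \<tau> z1 z2 + HK k1 k2 \<phi>1' \<phi>2 \<tau> z1 z2))
    \<and> (\<forall>\<phi>1 \<in> Jac k1 m. \<forall>\<phi>2 \<in> Jac k2 m. \<forall>\<phi>2' \<in> Jac k2 m. \<forall>s::complex.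
         HK k1 k2 \<phi>1 (\<lambda>\<tau> z. s * \<phi>2 \<tau> z + \<phi>2' \<tau> z)
         = (\<lambda>\<tau> z1 z2. s * HK k1 k2 \<phi>1 \<phi>2 \<tau> z1 z2 + HK k1 k2 \<phi>1 \<phi>2' \<tau> z1 z2))
    \<and> (\<forall>\<phi>1 \<in> JacCusp k1 m. \<forall>\<phi>2 \<in> JacCusp k2 m.
         LamK (k1 + k2) (HK k1 k2 \<phi>1 \<phi>2) \<in> JKCusp (k1 + k2) m)"
proof (intro conjI ballI allI)
  fix \<phi>1 \<phi>2 assume c1: "\<phi>1 \<in> JacCusp k1 m" and c2: "\<phi>2 \<in> JacCusp k2 m"
  then have j1: "\<phi>1 \<in> Jac k1 m" and j2: "\<phi>2 \<in> Jac k2 m"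
    by (auto simp: JacCusp_def)
  have "LamK (k1 + k2) (HK k1 k2 \<phi>1 \<phi>2) \<in> JK (k1 + k2) m"
    by (rule LamK_JK[OF HK_J1K[OF j1 j2]])
  moreover have "cuspidalK m (LamK (k1 + k2) (HK k1 k2 \<phi>1 \<phi>2))"
    unfolding HK_eq_LamK_Pf by (intro cuspidalK_LamK cuspidalK_Pf[OF c1 j2])
  ultimately show "LamK (k1 + k2) (HK k1 k2 \<phi>1 \<phi>2) \<in> JKCusp (k1 + k2) m"
    by (simp add: JKCusp_iff)
qed (auto intro: LamK_JK HK_J1K simp: LamK_linear HK_linear_left HK_linear_right)

end
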